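(* Let $f(n)=\sum_{k=0}^n(-1)^k\binom nk C_k C_{n-k}$ for integers $n\ge 0$. Then for all $n\ge 2$, $$n(n+2)f(n)=16(n-1)^2f(n-2).$$
   Context: $C_k=\binom{2k}{k}\frac{1}{k+1}$ denotes the $k$-th Catalan number. *)

theory Defs
  imports Complex_Main
begin

definition catalan :: "nat \<Rightarrow> real" where
  "catalan k = real ((2*k) choose k) / real (k+1)"

definition catF :: "nat \<Rightarrow> real" where
  "catF n = (\<Sum>k=0..n. (-1)^k * real (n choose k) * catalan k * catalan (n-k))"

end

theory Submission
  imports Defs
begin

text \<open>Creative telescoping (Zeilberger). Write \<open>t(n,k)\<close> for the summand of \<open>f(n)\<close>. Both
\<open>t(n,k+1)\<close> and \<open>t(n-2,k)\<close> are rational multiples of \<open>t(n,k)\<close>, so for the rational certificate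
\<open>R(n,k)\<close> below one checks by a rational-function identity that
\<open>n(n+2) t(n,k) - 16(n-1)\<^sup>2 t(n-2,k) = G(n,k+1) - G(n,k)\<close> with \<open>G = R t\<close>.
Summing over \<open>0 \<le> k \<le> n\<close> telescopes to \<open>G(n,n+1) - G(n,0) = 0\<close>, since \<open>t(n,n+1) = 0\<close>
and \<open>R(n,0) = 0\<close>.\<close>

lemma two_of_nat_ne_odd: "2 * real m \<noteq> real (2 * j + 1)"
proof
  assume "2 * real m = real (2 * j + 1)"
  then have "2 * m = 2 * j + 1" by linarith
  then show False by presburger
qed

lemma binomial_Suc_right:
  "real (n choose Suc k) = (real n - real k) / (real k + 1) * real (n choose k)"
proof (cases "k \<le> n")
  case True
  have "Suc k * (n choose Suc k) = (n - k) * (n choose k)"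
    by (simp only: binomial_absorption binomial_absorb_comp)
  then have "(real k + 1) * real (n choose Suc k) = (real n - real k) * real (n choose k)"
    using True by (metis add.commute of_nat_Suc of_nat_diff of_nat_mult)
  then show ?thesis by (simp add: field_simps)
qed (simp add: binomial_eq_0)

lemma binomial_absorb_comp_real:
  assumes "k \<le> n"
  shows "(real n - real k) * real (n choose k) = real n * real ((n - 1) choose k)"
  using arg_cong[OF binomial_absorb_comp[of n k], of real] assms by (simp add: of_nat_diff)

lemma binomial_absorb_comp_twice:
  assumes "k + 2 \<le> n"
  shows "real n * (real n - 1) * real ((n - 2) choose k)
       = (real n - real k) * (real n - real k - 1) * real (n choose k)"
proof -
  have "real (n - 1) = real n - 1" "n - 1 - 1 = n - 2" using assms by (simp_all add: of_nat_diff)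
  then have step: "(real n - real k - 1) * real ((n - 1) choose k) = (real n - 1) * real ((n - 2) choose k)"
    using binomial_absorb_comp_real[of k "n - 1"] assms by (simp add: algebra_simps)
  have "(real n - real k) * (real n - real k - 1) * real (n choose k)
      = (real n - real k - 1) * (real n * real ((n - 1) choose k))"
    using binomial_absorb_comp_real[of k n] assms by simp
  also have "\<dots> = real n * (real n - 1) * real ((n - 2) choose k)"
    using step by simp
  finally show ?thesis ..
qed

lemma catalan_fact: "catalan k = fact (2 * k) / (fact k * fact (Suc k))"
  unfolding catalan_def binomial_fact[of k "2 * k", OF le_add1[of k k, folded mult_2]]
  by (simp add: mult_2 algebra_simps)

lemma catalan_Suc: "catalan (Suc k) = 2 * (2 * real k + 1) / (real k + 2) * catalan k"
proof -
  have "fact (2 * Suc k) = (2 * real k + 2) * (2 * real k + 1) * fact (2 * k)"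
    by (simp add: algebra_simps)
  moreover have "real k + 2 \<noteq> 0" "real k + 1 \<noteq> 0" by linarith+
  ultimately show ?thesis
    unfolding catalan_fact by (simp add: divide_simps) (simp add: algebra_simps)
qed

definition catF_summand :: "nat \<Rightarrow> nat \<Rightarrow> real" where
  "catF_summand n k = (-1)^k * real (n choose k) * catalan k * catalan (n - k)"

lemma catF_eq_sum_summand:
  assumes "n \<le> m"
  shows "catF n = (\<Sum>k=0..m. catF_summand n k)"
proof -
  have "catF n = (\<Sum>k=0..n. catF_summand n k)"
    unfolding catF_def catF_summand_def ..
  also have "\<dots> = (\<Sum>k=0..m. catF_summand n k)"
    by (rule sum.mono_neutral_left) (use assms in \<open>auto simp: catF_summand_def\<close>)
  finally show ?thesis .
qed

definition shift_ratio :: "real \<Rightarrow> real \<Rightarrow> real" where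
  "shift_ratio N K = - (N - K) * (2 * K + 1) * (N - K + 1) / ((K + 1) * (K + 2) * (2 * (N - K) - 1))"

definition drop_ratio :: "real \<Rightarrow> real \<Rightarrow> real" where
  "drop_ratio N K = (N - K)^2 * ((N - K)^2 - 1) / (4 * N * (N - 1) * (2 * (N - K) - 1) * (2 * (N - K) - 3))"

lemma catF_summand_Suc:
  assumes "k \<le> n"
  shows "catF_summand n (Suc k) = shift_ratio (real n) (real k) * catF_summand n k"
proof (cases "k = n")
  case True
  then show ?thesis by (simp add: catF_summand_def shift_ratio_def)
next
  case False
  define j where "j = n - Suc k"
  have nk: "n - k = Suc j" and rj: "real n - real k = real j + 1"
    using assms False by (simp_all add: j_def of_nat_diff)
  have "real j + 2 \<noteq> 0" "real k + 1 \<noteq> 0" "real k + 2 \<noteq> 0" "2 * real j + 1 \<noteq> 0" by linarith+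
  then show ?thesis
    unfolding catF_summand_def shift_ratio_def nk rj binomial_Suc_right
      catalan_Suc[of k] catalan_Suc[of j] j_def[symmetric]
    by (simp add: divide_simps) (simp add: algebra_simps)
qed

lemma catF_summand_minus_two:
  assumes "2 \<le> n" "k \<le> n"
  shows "catF_summand (n - 2) k = drop_ratio (real n) (real k) * catF_summand n k"
proof (cases "k + 2 \<le> n")
  case True
  define j where "j = n - 2 - k"
  have nk: "n - k = Suc (Suc j)" and rj: "real n - real k = real j + 2"
    using True by (simp_all add: j_def of_nat_diff)
  have "real n \<noteq> 0" "real n - 1 \<noteq> 0" using assms by simp_all
  then have binom: "real ((n - 2) choose k)
      = (real n - real k) * (real n - real k - 1) / (real n * (real n - 1)) * real (n choose k)"
    using binomial_absorb_comp_twice[OF True] by (simp add: field_simps)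
  have "real j + 2 \<noteq> 0" "real j + 3 \<noteq> 0" "2 * real j + 1 \<noteq> 0" "2 * real j + 3 \<noteq> 0"
    by linarith+
  with \<open>real n \<noteq> 0\<close> \<open>real n - 1 \<noteq> 0\<close> show ?thesis
    unfolding catF_summand_def drop_ratio_def binom nk rj j_def[symmetric]
      catalan_Suc[of "Suc j"] catalan_Suc[of j]
    by (simp add: divide_simps) (simp add: algebra_simps power2_eq_square power4_eq_xxxx)
next
  case False
  with assms have "n = k \<or> n = Suc k" by arith
  then have "(real n - real k)^2 * ((real n - real k)^2 - 1) = 0" by auto
  then have "drop_ratio (real n) (real k) = 0" unfolding drop_ratio_def by simp
  moreover have "n - 2 < k" using False assms by arith
  then have "catF_summand (n - 2) k = 0" by (simp add: catF_summand_def)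
  ultimately show ?thesis by simp
qed

text \<open>The certificate is the output of Zeilberger's algorithm; only its verification is needed.\<close>

definition wz_certificate :: "real \<Rightarrow> real \<Rightarrow> real" where
  "wz_certificate N K =
     ((-4*N^3 + 3*N^2 + 4*N) * K + (-4*N^3 + 9*N^2 - 2) * K^2 + 6*N*(N - 1) * K^3 - 2*(N - 1) * K^4)
     / (N * (N + 1) * (2 * (N - K) - 1))"

lemma wz_certificate_identity:
  fixes N K :: real
  assumes "N \<noteq> 0" "N + 1 \<noteq> 0" "N - 1 \<noteq> 0" "K + 1 \<noteq> 0" "K + 2 \<noteq> 0"
    and "2 * (N - K) - 1 \<noteq> 0" "2 * (N - K) - 3 \<noteq> 0"
  shows "N * (N + 2) - 16 * (N - 1)^2 * drop_ratio N K
       = shift_ratio N K * wz_certificate N (K + 1) - wz_certificate N K"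
proof -
  have "2 * (N - (K + 1)) - 1 = 2 * (N - K) - 3" by simp
  with assms show ?thesis
    unfolding wz_certificate_def drop_ratio_def shift_ratio_def
    by (simp add: divide_simps) algebra
qed

definition catF_antidifference :: "nat \<Rightarrow> nat \<Rightarrow> real" where
  "catF_antidifference n k = wz_certificate (real n) (real k) * catF_summand n k"

lemma catF_summand_recurrence_telescopes:
  assumes "2 \<le> n" "k \<le> n"
  shows "real n * (real n + 2) * catF_summand n k - 16 * (real n - 1)^2 * catF_summand (n - 2) k
       = catF_antidifference n (Suc k) - catF_antidifference n k"
proof -
  have "real n \<noteq> 0" "real n + 1 \<noteq> 0" "real n - 1 \<noteq> 0" "real k + 1 \<noteq> 0" "real k + 2 \<noteq> 0"
    using assms by simp_all
  moreover have "2 * (real n - real k) - 1 \<noteq> 0" "2 * (real n - real k) - 3 \<noteq> 0"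
    using two_of_nat_ne_odd[of "n - k" 0] two_of_nat_ne_odd[of "n - k" 1] assms
    by (simp_all add: of_nat_diff)
  ultimately have "real n * (real n + 2) - 16 * (real n - 1)^2 * drop_ratio (real n) (real k)
      = shift_ratio (real n) (real k) * wz_certificate (real n) (real k + 1) - wz_certificate (real n) (real k)"
    by (rule wz_certificate_identity)
  from arg_cong[OF this, of "\<lambda>x. x * catF_summand n k"] show ?thesis
    unfolding catF_antidifference_def catF_summand_Suc[OF assms(2)] catF_summand_minus_two[OF assms]
    by (simp add: algebra_simps)
qed

theorem mainTheorem7:
  fixes n :: nat
  assumes "n \<ge> 2"
  shows "real n * (real n + 2) * catF n = 16 * (real n - 1)^2 * catF (n-2)"
proof -
  have "catF n = (\<Sum>k=0..n. catF_summand n k)" "catF (n - 2) = (\<Sum>k=0..n. catF_summand (n - 2) k)"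
    by (simp_all add: catF_eq_sum_summand)
  then have "real n * (real n + 2) * catF n - 16 * (real n - 1)^2 * catF (n - 2)
      = (\<Sum>k=0..n. real n * (real n + 2) * catF_summand n k - 16 * (real n - 1)^2 * catF_summand (n - 2) k)"
    by (simp add: sum_subtractf sum_distrib_left)
  also have "\<dots> = (\<Sum>k=0..n. catF_antidifference n (Suc k) - catF_antidifference n k)"
    using catF_summand_recurrence_telescopes[OF assms] by simp
  also have "\<dots> = catF_antidifference n (Suc n) - catF_antidifference n 0"
    by (rule sum_Suc_diff) simp
  also have "\<dots> = 0"
    by (simp add: catF_antidifference_def catF_summand_def wz_certificate_def)
  finally show ?thesis by simp
qed

end
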